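(* Let $c<1$ be any constant, $\ell\le n^c$, and suppose $d$ is unknown to the algorithm. Any non-adaptive randomized group testing algorithm that, with probability at least $3/4$, detects $\ell$ defective items must make at least $\Omega\left(\frac{\ell\log^2 n}{\log\ell+\log\log n}\right)$ tests.
   Context: Group testing: items $X=[n]$, unknown defective set $I\subseteq X$ with $d=|I|$. A test $Q\subseteq X$ has answer $1$ if $Q\cap I\neq\emptyset$ and $0$ otherwise. A non-adaptive (randomized) algorithm chooses all its tests before seeing any answer, then computes its output from the answers. "Detects $\ell$ defective items" means it outputs $L\subseteq I$ with $|L|=\ell$. "$d$ is unknown" means the algorithm receives no information about $|I|$ and must succeed (with the stated probability) for every defective set $I$ with $|I|\ge\ell$. Logarithms are base 2. *)

theory Defs
  imports "HOL-Probability.Probability"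
begin

text \<open>Items are X = {0..<n}; the defective set I is a subset of X.
  A test Q answers True iff Q meets I.\<close>

definition test_answers :: "nat set list \<Rightarrow> nat set \<Rightarrow> bool list" where
  "test_answers T I = map (\<lambda>Q. Q \<inter> I \<noteq> {}) T"

definition detects :: "nat \<Rightarrow> nat set \<Rightarrow> nat set \<Rightarrow> bool" where
  "detects l I L \<longleftrightarrow> L \<subseteq> I \<and> card L = l"

text \<open>A non-adaptive randomized algorithm is a probability distribution over pairs
  (T, D): a list T of tests (chosen before any answer is seen) and a decoder D that
  maps the vector of answers to the output.  It uses at most m tests, and, with d unknown,
  it must detect l defectives with probability at least 3/4 for every defective set
  I \<subseteq> X with |I| \<ge> l.\<close>
definition randomized_nonadaptive_detects ::
  "nat \<Rightarrow> nat \<Rightarrow> nat \<Rightarrow> (nat set list \<times> (bool list \<Rightarrow> nat set)) pmf \<Rightarrow> bool" where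
  "randomized_nonadaptive_detects n l m A \<longleftrightarrow>
     (\<forall>(T, D) \<in> set_pmf A. length T \<le> m \<and> (\<forall>Q \<in> set T. Q \<subseteq> {..<n})) \<and>
     (\<forall>I. I \<subseteq> {..<n} \<and> card I \<ge> l \<longrightarrow>
        measure_pmf.prob A {(T, D). detects l I (D (test_answers T I))} \<ge> 3/4)"

end

theory Submission
  imports Defs
begin

(*
  By Yao's principle it suffices to bound the success probability of a deterministic
  algorithm with m tests on a random defective set: pick one of k densities
  d_i = l R^(2i), R = 16 (m + 1), uniformly, and then a uniform d_i-subset of the items.

  For a test Q of size q and density d, the answer is 0 on all but a 1/R fraction of the
  d-sets if q d <= n / R, and 1 on all but a 1/R fraction if q d >= n R. Only tests in the
  window n / R < q d < n R carry information, and as consecutive densities differ by the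
  factor R^2, each test lies in the window of at most one density. So for at least half of
  the densities at most 2 m / k tests are informative; then, outside an m / R fraction of
  the inputs, the answer vector takes at most 2^(2 m / k) values, and each output of size
  l is contained in only a (d / n)^l fraction of the d-sets. Writing l <= n^(1 - 2a), the
  k = O(a log n / log R) densities satisfy d_i <= n^(1 - a), and the resulting bound is
  below 1/16 unless m is of order a^2 l log^2 n / (log l + log log n); so the averaged
  success probability is at most 9/16 < 3/4.
*)

lemma binomial_diff_mult_pow_le:
  assumes "l \<le> d" "d \<le> n"
  shows "real ((n - l) choose (d - l)) * real n ^ l \<le> real (n choose d) * real d ^ l"
  using assms(1)
proof (induction l)
  case 0
  then show ?case by simp
next
  case (Suc l)
  then have "l < d" by simp
  have IH: "real ((n - l) choose (d - l)) * real n ^ l \<le> real (n choose d) * real d ^ l"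
    using Suc by simp
  have "(n - l) * ((n - Suc l) choose (d - Suc l)) = (d - l) * ((n - l) choose (d - l))"
    using times_binomial_minus1_eq[of "d - l" "n - l"] \<open>l < d\<close> by simp
  then have absorb: "real (n - l) * real ((n - Suc l) choose (d - Suc l))
      = real (d - l) * real ((n - l) choose (d - l))"
    by (metis of_nat_mult)
  have "real d * real l \<le> real n * real l"
    using assms(2) by (simp add: mult_right_mono)
  then have ratio: "real (d - l) * real n \<le> real d * real (n - l)"
    using \<open>l < d\<close> assms(2) by (simp add: left_diff_distrib right_diff_distrib mult.commute)
  have "real ((n - Suc l) choose (d - Suc l)) * real n ^ Suc l * real (n - l)
      = (real (n - l) * real ((n - Suc l) choose (d - Suc l))) * real n ^ l * real n"
    by (simp only: power_Suc mult_ac)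
  also have "\<dots> = real ((n - l) choose (d - l)) * real n ^ l * (real (d - l) * real n)"
    unfolding absorb by (simp only: mult_ac)
  also have "\<dots> \<le> real (n choose d) * real d ^ l * (real d * real (n - l))"
    using IH ratio by (rule mult_mono) auto
  also have "\<dots> = real (n choose d) * real d ^ Suc l * real (n - l)"
    by (simp only: power_Suc mult_ac)
  finally show ?case
    by (rule mult_right_le_imp_le) (use \<open>l < d\<close> assms(2) in simp)
qed

lemma binomial_diff_choose_le:
  assumes "q \<le> n" "d \<le> n" "0 < n"
  shows "real ((n - q) choose d) \<le> real (n choose d) * (1 - real d / real n) ^ q"
proof (cases "d \<le> n - q")
  case False
  have "real d / real n \<le> 1"
    using assms(2,3) by simp
  then show ?thesis
    using False by (simp add: binomial_eq_0)
next
  case True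
  then have "q \<le> n - d"
    using assms(1,2) by arith
  have "(n - q) choose (n - d - q) = (n - q) choose d"
    unfolding diff_commute[of n d q] by (rule binomial_symmetric[OF True, symmetric])
  moreover have "n choose (n - d) = n choose d"
    by (rule binomial_symmetric[OF assms(2), symmetric])
  moreover have "real (n - d) = real n * (1 - real d / real n)"
    using assms(2,3) by (simp add: of_nat_diff right_diff_distrib)
  ultimately have "real ((n - q) choose d) * real n ^ q
      \<le> real (n choose d) * (real n * (1 - real d / real n)) ^ q"
    using binomial_diff_mult_pow_le[OF \<open>q \<le> n - d\<close> diff_le_self] by (simp only:)
  also have "\<dots> = (real (n choose d) * (1 - real d / real n) ^ q) * real n ^ q"
    by (simp only: power_mult_distrib mult_ac)
  finally show ?thesis
    by (rule mult_right_le_imp_le) (use assms(3) in simp)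
qed

lemma one_minus_pow_mult_le:
  fixes x :: real
  assumes "0 \<le> x" "x \<le> 1"
  shows "(1 - x) ^ d * (1 + real d * x) \<le> 1"
proof -
  have "(1 - x) ^ d * (1 + real d * x) \<le> (1 - x) ^ d * (1 + x) ^ d"
    using Bernoulli_inequality[of x d] assms by (intro mult_left_mono) auto
  also have "\<dots> = (1 - x\<^sup>2) ^ d"
    by (simp add: power_mult_distrib[symmetric] power2_eq_square algebra_simps)
  also have "\<dots> \<le> 1"
    using assms by (intro power_le_one) (auto simp: power_le_one)
  finally show ?thesis .
qed

lemma real_card_UN_le:
  assumes "finite A" "\<And>a. a \<in> A \<Longrightarrow> real (card (B a)) \<le> K"
  shows "real (card (\<Union>a\<in>A. B a)) \<le> real (card A) * K"
proof -
  have "real (card (\<Union>a\<in>A. B a)) \<le> (\<Sum>a\<in>A. real (card (B a)))"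
    using of_nat_mono[OF card_UN_le[OF assms(1), of B]] by simp
  also have "\<dots> \<le> real (card A) * K"
    using assms(2) by (rule sum_bounded_above)
  finally show ?thesis .
qed

lemma sum_le_if_few_heavy:
  fixes f :: "nat \<Rightarrow> real" and w :: "nat \<Rightarrow> nat"
  assumes weight: "(\<Sum>i<k. w i) \<le> m"
    and le_one: "\<And>i. i < k \<Longrightarrow> f i \<le> 1"
    and light: "\<And>i. i < k \<Longrightarrow> real (w i) \<le> 2 * real m / real k \<Longrightarrow> f i \<le> \<epsilon>"
    and "\<epsilon> \<le> 1"
  shows "(\<Sum>i<k. f i) \<le> (1 + \<epsilon>) / 2 * real k"
proof -
  define B where "B = {i. i < k \<and> 2 * real m / real k < real (w i)}"
  have "B \<subseteq> {..<k}"
    by (auto simp: B_def)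
  then have "card B \<le> k"
    using card_mono[of "{..<k}" B] by simp
  have heavy_few: "2 * real (card B) \<le> real k"
  proof (cases "B = {}")
    case False
    have "real (card B) * (2 * real m / real k) = (\<Sum>i\<in>B. 2 * real m / real k)"
      by simp
    also have "\<dots> < (\<Sum>i\<in>B. real (w i))"
      using False \<open>B \<subseteq> {..<k}\<close> by (intro sum_strict_mono) (auto simp: B_def intro: finite_subset)
    also have "\<dots> \<le> (\<Sum>i<k. real (w i))"
      using \<open>B \<subseteq> {..<k}\<close> by (intro sum_mono2) auto
    also have "\<dots> \<le> real m"
      using weight by (simp flip: of_nat_sum)
    finally have "real (card B) * (2 * real m / real k) < real m" .
    moreover have "0 < k"
      using False by (auto simp: B_def)
    ultimately show ?thesis
      by (cases "m = 0") (simp_all add: field_simps)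
  qed simp
  have "(\<Sum>i<k. f i) = (\<Sum>i\<in>B. f i) + (\<Sum>i\<in>{..<k} - B. f i)"
    using \<open>B \<subseteq> {..<k}\<close> by (simp add: sum.subset_diff)
  also have "\<dots> \<le> (\<Sum>i\<in>B. 1) + (\<Sum>i\<in>{..<k} - B. \<epsilon>)"
    using \<open>B \<subseteq> {..<k}\<close> by (intro add_mono sum_mono le_one light) (auto simp: B_def not_less)
  also have "\<dots> = real (card B) + \<epsilon> * (real k - real (card B))"
    using \<open>B \<subseteq> {..<k}\<close> \<open>card B \<le> k\<close> by (simp add: card_Diff_subset finite_subset)
  also have "\<dots> \<le> (1 + \<epsilon>) / 2 * real k"
  proof -
    have "2 * real (card B) * (1 - \<epsilon>) \<le> real k * (1 - \<epsilon>)"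
      using heavy_few \<open>\<epsilon> \<le> 1\<close> by (intro mult_right_mono) auto
    then show ?thesis
      by (simp add: algebra_simps)
  qed
  finally show ?thesis .
qed

section \<open>Random subsets of a fixed size\<close>

definition subsets_of_size :: "nat \<Rightarrow> nat \<Rightarrow> nat set set" where
  "subsets_of_size n d = {I. I \<subseteq> {..<n} \<and> card I = d}"

lemma finite_subsets_of_size [simp]: "finite (subsets_of_size n d)"
  unfolding subsets_of_size_def by (rule finite_subset[of _ "Pow {..<n}"]) auto

lemma card_subsets_of_size: "card (subsets_of_size n d) = n choose d"
  unfolding subsets_of_size_def using n_subsets[of "{..<n}" d] by simp

lemma card_supersets_le:
  assumes "L \<subseteq> {..<n}"
  shows "card {I \<in> subsets_of_size n d. L \<subseteq> I} \<le> (n - card L) choose (d - card L)"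
proof -
  let ?J = "{J. J \<subseteq> {..<n} - L \<and> card J = d - card L}"
  have "finite L"
    using assms finite_subset by blast
  have "{I \<in> subsets_of_size n d. L \<subseteq> I} \<subseteq> (\<lambda>J. J \<union> L) ` ?J"
  proof
    fix I assume "I \<in> {I \<in> subsets_of_size n d. L \<subseteq> I}"
    then have "I \<subseteq> {..<n}" "card I = d" "L \<subseteq> I"
      by (auto simp: subsets_of_size_def)
    moreover have "finite I"
      using \<open>I \<subseteq> {..<n}\<close> finite_subset by blast
    ultimately have "I - L \<in> ?J" and "I = (I - L) \<union> L"
      by (auto simp: card_Diff_subset \<open>finite L\<close>)
    then show "I \<in> (\<lambda>J. J \<union> L) ` ?J"
      by blast
  qed
  then have "card {I \<in> subsets_of_size n d. L \<subseteq> I} \<le> card ((\<lambda>J. J \<union> L) ` ?J)"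
    by (intro card_mono) (auto intro: finite_subset[of _ "Pow {..<n}"])
  also have "\<dots> \<le> card ?J"
    by (rule card_image_le) (auto intro: finite_subset[of _ "Pow {..<n}"])
  also have "\<dots> = (n - card L) choose (d - card L)"
    using n_subsets[of "{..<n} - L"] assms \<open>finite L\<close> by (simp add: card_Diff_subset)
  finally show ?thesis .
qed

lemma card_supersets_mult_pow_le:
  assumes "d \<le> n"
  shows "real (card {I \<in> subsets_of_size n d. L \<subseteq> I}) * real n ^ card L
    \<le> real (n choose d) * real d ^ card L"
proof (cases "L \<subseteq> {..<n} \<and> card L \<le> d")
  case True
  then have "real (card {I \<in> subsets_of_size n d. L \<subseteq> I}) * real n ^ card L
      \<le> real ((n - card L) choose (d - card L)) * real n ^ card L"
    using card_supersets_le by (intro mult_right_mono) auto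
  also have "\<dots> \<le> real (n choose d) * real d ^ card L"
    using True assms by (intro binomial_diff_mult_pow_le) auto
  finally show ?thesis .
next
  case False
  have "{I \<in> subsets_of_size n d. L \<subseteq> I} = {}"
  proof (intro equals0I)
    fix I assume "I \<in> {I \<in> subsets_of_size n d. L \<subseteq> I}"
    then have "I \<subseteq> {..<n}" "card I = d" "L \<subseteq> I"
      by (auto simp: subsets_of_size_def)
    then show False
      using False card_mono[OF finite_subset] by (metis finite_lessThan order_trans)
  qed
  then show ?thesis
    unfolding \<open>{I \<in> subsets_of_size n d. L \<subseteq> I} = {}\<close> by simp
qed

lemma card_meeting_le:
  assumes "0 < n" "d \<le> n" "R * card (Q \<inter> {..<n}) * d \<le> n"
  shows "R * card {I \<in> subsets_of_size n d. Q \<inter> I \<noteq> {}} \<le> n choose d"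
proof -
  define S where "S = subsets_of_size n d"
  define Q' where "Q' = Q \<inter> {..<n}"
  have containing: "card {I \<in> S. x \<in> I} * n \<le> (n choose d) * d" for x
  proof -
    have "real (card {I \<in> S. {x} \<subseteq> I}) * real n \<le> real (n choose d) * real d"
      using card_supersets_mult_pow_le[OF assms(2), of "{x}"] by (simp add: S_def)
    then show ?thesis
      by (simp flip: of_nat_mult)
  qed
  have "{I \<in> S. Q \<inter> I \<noteq> {}} \<subseteq> (\<Union>x\<in>Q'. {I \<in> S. x \<in> I})"
    by (auto simp: S_def subsets_of_size_def Q'_def)
  then have "card {I \<in> S. Q \<inter> I \<noteq> {}} \<le> card (\<Union>x\<in>Q'. {I \<in> S. x \<in> I})"
    by (rule card_mono[rotated]) (simp add: S_def Q'_def)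
  also have "\<dots> \<le> (\<Sum>x\<in>Q'. card {I \<in> S. x \<in> I})"
    by (rule card_UN_le) (simp add: Q'_def)
  finally have "card {I \<in> S. Q \<inter> I \<noteq> {}} \<le> (\<Sum>x\<in>Q'. card {I \<in> S. x \<in> I})" .
  then have "R * card {I \<in> S. Q \<inter> I \<noteq> {}} * n \<le> R * (\<Sum>x\<in>Q'. card {I \<in> S. x \<in> I}) * n"
    by simp
  also have "\<dots> = R * (\<Sum>x\<in>Q'. card {I \<in> S. x \<in> I} * n)"
    by (simp add: sum_distrib_right)
  also have "\<dots> \<le> R * (card Q' * ((n choose d) * d))"
    using sum_mono[of Q' "\<lambda>x. card {I \<in> S. x \<in> I} * n", OF containing] by simp
  also have "\<dots> = (R * card Q' * d) * (n choose d)"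
    by (simp only: mult_ac)
  also have "\<dots> \<le> (n choose d) * n"
    using assms(3) by (simp add: Q'_def)
  finally show ?thesis
    using assms(1) by (simp add: S_def)
qed

lemma card_avoiding_le:
  assumes "0 < n" "d \<le> n" "n * R \<le> card (Q \<inter> {..<n}) * d"
  shows "R * card {I \<in> subsets_of_size n d. Q \<inter> I = {}} \<le> n choose d"
proof -
  define q where "q = card (Q \<inter> {..<n})"
  define x where "x = real d / real n"
  have "q \<le> n"
    using card_mono[of "{..<n}" "Q \<inter> {..<n}"] by (simp add: q_def)
  have "{..<n} - Q = {..<n} - Q \<inter> {..<n}"
    by blast
  then have "card ({..<n} - Q) = n - q"
    using card_Diff_subset[of "Q \<inter> {..<n}" "{..<n}"] by (simp add: q_def)
  moreover have "{I \<in> subsets_of_size n d. Q \<inter> I = {}} = {I. I \<subseteq> {..<n} - Q \<and> card I = d}"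
    by (auto simp: subsets_of_size_def)
  ultimately have avoiding: "card {I \<in> subsets_of_size n d. Q \<inter> I = {}} = (n - q) choose d"
    using n_subsets[of "{..<n} - Q" d] by simp
  have x: "0 \<le> x" "x \<le> 1"
    using assms(1,2) by (auto simp: x_def)
  have "real n * real R \<le> real q * real d"
    using of_nat_mono[OF assms(3)] by (simp add: q_def)
  then have "real R \<le> real q * x"
    using assms(1) by (simp add: x_def field_simps)
  then have "real R * (1 - x) ^ q \<le> (1 + real q * x) * (1 - x) ^ q"
    using x by (intro mult_right_mono) auto
  also have "\<dots> \<le> 1"
    using one_minus_pow_mult_le[OF x, of q] by (simp add: mult.commute)
  finally have R_le: "real R * (1 - x) ^ q \<le> 1" .
  have "real R * real ((n - q) choose d) \<le> real R * (real (n choose d) * (1 - x) ^ q)"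
    unfolding x_def by (intro mult_left_mono binomial_diff_choose_le[OF \<open>q \<le> n\<close> assms(2,1)]) simp
  also have "\<dots> = real (n choose d) * (real R * (1 - x) ^ q)"
    by (simp only: mult_ac)
  also have "\<dots> \<le> real (n choose d)"
    using R_le by (intro mult_left_le) auto
  finally have "real R * real ((n - q) choose d) \<le> real (n choose d)" .
  then show ?thesis
    by (simp add: avoiding flip: of_nat_mult)
qed

section \<open>Informative tests\<close>

definition informative_test :: "nat \<Rightarrow> nat \<Rightarrow> nat \<Rightarrow> nat set \<Rightarrow> bool" where
  "informative_test n R d Q \<longleftrightarrow> n < R * card (Q \<inter> {..<n}) * d \<and> card (Q \<inter> {..<n}) * d < n * R"

definition typical_answer :: "nat \<Rightarrow> nat \<Rightarrow> nat \<Rightarrow> nat set \<Rightarrow> bool" where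
  "typical_answer n R d Q \<longleftrightarrow> n * R \<le> card (Q \<inter> {..<n}) * d"

definition informative_tests :: "nat \<Rightarrow> nat \<Rightarrow> nat \<Rightarrow> nat set list \<Rightarrow> nat set" where
  "informative_tests n R d T = {j. j < length T \<and> informative_test n R d (T ! j)}"

definition atypical_sets :: "nat \<Rightarrow> nat \<Rightarrow> nat \<Rightarrow> nat set \<Rightarrow> nat set set" where
  "atypical_sets n R d Q = {I \<in> subsets_of_size n d. (Q \<inter> I \<noteq> {}) \<noteq> typical_answer n R d Q}"

lemma card_atypical_sets_le:
  assumes "0 < n" "d \<le> n" "\<not> informative_test n R d Q"
  shows "R * card (atypical_sets n R d Q) \<le> n choose d"
proof (cases "typical_answer n R d Q")
  case True
  then show ?thesis
    using card_avoiding_le[OF assms(1,2)] by (simp add: atypical_sets_def typical_answer_def)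
next
  case False
  then have "R * card (Q \<inter> {..<n}) * d \<le> n"
    using assms(3) by (simp add: typical_answer_def informative_test_def)
  then show ?thesis
    using card_meeting_le[OF assms(1,2)] False by (simp add: atypical_sets_def)
qed

lemma not_informative_test_if_separated:
  assumes "informative_test n R d Q" "R * R * d \<le> d'"
  shows "\<not> informative_test n R d' Q"
proof
  assume "informative_test n R d' Q"
  define q where "q = card (Q \<inter> {..<n})"
  have "n < R * q * d" "q * d' < n * R"
    using assms(1) \<open>informative_test n R d' Q\<close> by (simp_all add: informative_test_def q_def)
  then have "n * R < q * (R * R * d)"
    by (metis mult.commute mult.left_commute mult_less_mono1 not_gr0 mult_0 not_less_zero)
  also have "\<dots> \<le> q * d'"
    using assms(2) by simp
  finally show False
    using \<open>q * d' < n * R\<close> by simp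
qed

lemma card_detecting_output_le:
  assumes "0 < n" "d \<le> n"
  shows "real (card {I \<in> subsets_of_size n d. detects l I L}) \<le> real (n choose d) * (real d / real n) ^ l"
proof (cases "card L = l")
  case True
  then have "real (card {I \<in> subsets_of_size n d. detects l I L}) * real n ^ l
      \<le> real (n choose d) * real d ^ l"
    using card_supersets_mult_pow_le[OF assms(2), of L] by (simp add: detects_def)
  then show ?thesis
    using assms(1) by (simp add: power_divide field_simps)
next
  case False
  then show ?thesis
    by (simp add: detects_def)
qed

definition answer_patterns :: "nat \<Rightarrow> nat \<Rightarrow> nat \<Rightarrow> nat set list \<Rightarrow> bool list set" where
  "answer_patterns n R d T = (\<lambda>U. map (\<lambda>j. if j \<in> informative_tests n R d T then j \<in> U
     else typical_answer n R d (T ! j)) [0..<length T]) ` Pow (informative_tests n R d T)"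

lemma informative_tests_subset: "informative_tests n R d T \<subseteq> {..<length T}"
  by (auto simp: informative_tests_def)

lemma finite_informative_tests: "finite (informative_tests n R d T)"
  using finite_subset[OF informative_tests_subset] by blast

lemma finite_answer_patterns: "finite (answer_patterns n R d T)"
  by (simp add: answer_patterns_def finite_informative_tests)

lemma card_answer_patterns_le: "real (card (answer_patterns n R d T)) \<le> 2 ^ card (informative_tests n R d T)"
proof -
  have "card (answer_patterns n R d T) \<le> card (Pow (informative_tests n R d T))"
    unfolding answer_patterns_def by (rule card_image_le) (simp add: finite_informative_tests)
  then show ?thesis
    by (simp add: card_Pow finite_informative_tests flip: of_nat_le_iff)
qed

lemma test_answers_in_answer_patterns:
  assumes "\<And>j. j < length T \<Longrightarrow> j \<notin> informative_tests n R d T \<Longrightarrow>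
    (T ! j \<inter> I \<noteq> {}) = typical_answer n R d (T ! j)"
  shows "test_answers T I \<in> answer_patterns n R d T"
proof -
  let ?U = "{j \<in> informative_tests n R d T. T ! j \<inter> I \<noteq> {}}"
  have "test_answers T I = map (\<lambda>j. if j \<in> informative_tests n R d T then j \<in> ?U
      else typical_answer n R d (T ! j)) [0..<length T]"
    by (rule nth_equalityI) (simp_all add: test_answers_def assms)
  then show ?thesis
    unfolding answer_patterns_def by blast
qed

lemma detecting_subset:
  "{I \<in> subsets_of_size n d. detects l I (D (test_answers T I))}
    \<subseteq> (\<Union>j\<in>{..<length T} - informative_tests n R d T. atypical_sets n R d (T ! j))
      \<union> (\<Union>a\<in>answer_patterns n R d T. {I \<in> subsets_of_size n d. detects l I (D a)})"
proof
  fix I assume I: "I \<in> {I \<in> subsets_of_size n d. detects l I (D (test_answers T I))}"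
  show "I \<in> (\<Union>j\<in>{..<length T} - informative_tests n R d T. atypical_sets n R d (T ! j))
      \<union> (\<Union>a\<in>answer_patterns n R d T. {I \<in> subsets_of_size n d. detects l I (D a)})"
  proof (cases "\<exists>j\<in>{..<length T} - informative_tests n R d T. I \<in> atypical_sets n R d (T ! j)")
    case False
    then have "test_answers T I \<in> answer_patterns n R d T"
      using I by (intro test_answers_in_answer_patterns) (auto simp: atypical_sets_def)
    then show ?thesis
      using I by blast
  qed blast
qed

lemma card_detecting_le:
  assumes "0 < n" "d \<le> n" "0 < R"
  shows "real (card {I \<in> subsets_of_size n d. detects l I (D (test_answers T I))})
    \<le> real (length T) * real (n choose d) / real R
      + 2 ^ card (informative_tests n R d T) * (real (n choose d) * (real d / real n) ^ l)"
proof -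
  define J where "J = {..<length T} - informative_tests n R d T"
  define A where "A = (\<Union>j\<in>J. atypical_sets n R d (T ! j))"
  define B where "B = (\<Union>a\<in>answer_patterns n R d T. {I \<in> subsets_of_size n d. detects l I (D a)})"
  have "finite (A \<union> B)"
    by (rule finite_subset[of _ "subsets_of_size n d"]) (auto simp: A_def B_def atypical_sets_def)
  then have "card {I \<in> subsets_of_size n d. detects l I (D (test_answers T I))} \<le> card A + card B"
    using detecting_subset unfolding A_def B_def J_def by (intro order_trans[OF card_mono card_Un_le])
  moreover have "real (card A) \<le> real (length T) * (real (n choose d) / real R)"
  proof -
    have "real (card A) \<le> real (card J) * (real (n choose d) / real R)"
      unfolding A_def
    proof (rule real_card_UN_le)
      fix j assume "j \<in> J"
      then have "R * card (atypical_sets n R d (T ! j)) \<le> n choose d"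
        by (intro card_atypical_sets_le[OF assms(1,2)]) (simp add: J_def informative_tests_def)
      then have "real (R * card (atypical_sets n R d (T ! j))) \<le> real (n choose d)"
        by (rule of_nat_mono)
      then show "real (card (atypical_sets n R d (T ! j))) \<le> real (n choose d) / real R"
        using assms(3) by (simp add: field_simps)
    qed (simp add: J_def)
    also have "\<dots> \<le> real (length T) * (real (n choose d) / real R)"
      using card_mono[of "{..<length T}" J] by (intro mult_right_mono) (auto simp: J_def)
    finally show ?thesis .
  qed
  moreover have "real (card B) \<le> 2 ^ card (informative_tests n R d T) * (real (n choose d) * (real d / real n) ^ l)"
  proof -
    have "real (card B) \<le> real (card (answer_patterns n R d T)) * (real (n choose d) * (real d / real n) ^ l)"
      unfolding B_def
      by (rule real_card_UN_le[OF finite_answer_patterns]) (use card_detecting_output_le[OF assms(1,2)] in simp)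
    also have "\<dots> \<le> 2 ^ card (informative_tests n R d T) * (real (n choose d) * (real d / real n) ^ l)"
      by (intro mult_right_mono card_answer_patterns_le) simp
    finally show ?thesis .
  qed
  ultimately show ?thesis
    by simp
qed

section \<open>Detection rate of a deterministic algorithm\<close>

definition detection_event :: "nat \<Rightarrow> nat set \<Rightarrow> (nat set list \<times> (bool list \<Rightarrow> nat set)) set" where
  "detection_event l I = {(T, D). detects l I (D (test_answers T I))}"

definition detection_rate :: "nat \<Rightarrow> nat \<Rightarrow> nat \<Rightarrow> nat set list \<times> (bool list \<Rightarrow> nat set) \<Rightarrow> real" where
  "detection_rate n l d x =
     real (card {I \<in> subsets_of_size n d. x \<in> detection_event l I}) / real (n choose d)"

lemma detection_rate_le_one: "detection_rate n l d x \<le> 1"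
proof -
  have "card {I \<in> subsets_of_size n d. x \<in> detection_event l I} \<le> n choose d"
    using card_mono[of "subsets_of_size n d"] by (simp add: card_subsets_of_size)
  then show ?thesis
    by (auto simp: detection_rate_def divide_le_eq_1)
qed

lemma card_informative_tests_sum_le:
  fixes d :: "nat \<Rightarrow> nat"
  assumes "\<And>i j. i < j \<Longrightarrow> j < k \<Longrightarrow> R * R * d i \<le> d j"
  shows "(\<Sum>i<k. card (informative_tests n R (d i) T)) \<le> length T"
proof -
  have ordered: "informative_tests n R (d i) T \<inter> informative_tests n R (d j) T = {}"
    if "i < j" "j < k" for i j
    using not_informative_test_if_separated[OF _ assms[OF that]] by (auto simp: informative_tests_def)
  have disjoint: "informative_tests n R (d i) T \<inter> informative_tests n R (d j) T = {}"
    if "i < k" "j < k" "i \<noteq> j" for i j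
  proof (cases "i < j")
    case False
    then have "j < i"
      using \<open>i \<noteq> j\<close> by simp
    then show ?thesis
      using ordered[of j i] \<open>i < k\<close> by blast
  qed (use ordered \<open>j < k\<close> in blast)
  have "(\<Sum>i<k. card (informative_tests n R (d i) T)) = card (\<Union>i<k. informative_tests n R (d i) T)"
    by (rule card_UN_disjoint[symmetric])
      (simp_all add: finite_informative_tests disjoint)
  also have "\<dots> \<le> card {..<length T}"
    by (rule card_mono) (auto dest: informative_tests_subset[THEN subsetD])
  finally show ?thesis
    by simp
qed

lemma sum_detection_rate_le:
  fixes d :: "nat \<Rightarrow> nat"
  assumes "0 < n" "0 < R" "16 * m \<le> R" "length T \<le> m"
    and dn: "\<And>i. i < k \<Longrightarrow> d i \<le> n"
    and separated: "\<And>i j. i < j \<Longrightarrow> j < k \<Longrightarrow> R * R * d i \<le> d j"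
    and small: "\<And>i. i < k \<Longrightarrow> 2 powr (2 * real m / real k) * (real (d i) / real n) ^ l \<le> 1/16"
  shows "(\<Sum>i<k. detection_rate n l (d i) (T, D)) \<le> 9/16 * real k"
proof -
  define w where "w i = card (informative_tests n R (d i) T)" for i
  have "(\<Sum>i<k. detection_rate n l (d i) (T, D)) \<le> (1 + 1/8) / 2 * real k"
  proof (rule sum_le_if_few_heavy[where w = w])
    show "(\<Sum>i<k. w i) \<le> m"
      unfolding w_def by (rule le_trans[OF card_informative_tests_sum_le[OF separated] assms(4)])
    show "detection_rate n l (d i) (T, D) \<le> 1" for i
      by (rule detection_rate_le_one)
    fix i assume "i < k" and light: "real (w i) \<le> 2 * real m / real k"
    have C: "0 < real (n choose d i)"
      using dn[OF \<open>i < k\<close>] by simp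
    have "detection_rate n l (d i) (T, D)
        \<le> (real (length T) * real (n choose d i) / real R
            + 2 ^ w i * (real (n choose d i) * (real (d i) / real n) ^ l)) / real (n choose d i)"
      unfolding detection_rate_def detection_event_def w_def
      using card_detecting_le[OF assms(1) dn[OF \<open>i < k\<close>] assms(2)] C
      by (simp add: divide_right_mono)
    also have "\<dots> = real (length T) / real R + 2 ^ w i * (real (d i) / real n) ^ l"
      using C by (simp add: add_divide_distrib)
    also have "\<dots> \<le> 1/16 + 2 powr (2 * real m / real k) * (real (d i) / real n) ^ l"
    proof (intro add_mono mult_right_mono)
      show "real (length T) / real R \<le> 1/16"
        using assms(2-4) by (simp add: divide_le_eq)
      show "(2::real) ^ w i \<le> 2 powr (2 * real m / real k)"
        using light by (simp add: powr_realpow[symmetric])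
    qed simp
    also have "\<dots> \<le> 1/8"
      using small[OF \<open>i < k\<close>] by simp
    finally show "detection_rate n l (d i) (T, D) \<le> 1/8" .
  qed simp
  then show ?thesis
    by simp
qed

section \<open>Yao's principle\<close>

lemma detection_rate_eq_sum_indicator:
  "detection_rate n l d x
    = (\<Sum>I\<in>subsets_of_size n d. indicator (detection_event l I) x) / real (n choose d)"
  by (simp add: detection_rate_def indicator_def sum.If_cases Int_def)

lemma integrable_detection_rate: "integrable (measure_pmf A) (detection_rate n l d)"
  unfolding detection_rate_eq_sum_indicator[abs_def]
  by (intro integrable_divide_zero Bochner_Integration.integrable_sum integrable_real_indicator)
    (simp_all add: less_top[symmetric] measure_pmf.emeasure_finite)

lemma expectation_detection_rate_ge:
  assumes "randomized_nonadaptive_detects n l m A" "l \<le> d" "d \<le> n"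
  shows "3/4 \<le> measure_pmf.expectation A (detection_rate n l d)"
proof -
  have prob: "3/4 \<le> measure_pmf.prob A (detection_event l I)" if "I \<in> subsets_of_size n d" for I
    using assms that by (auto simp: randomized_nonadaptive_detects_def subsets_of_size_def detection_event_def)
  have "3/4 = (\<Sum>I\<in>subsets_of_size n d. 3/4) / real (n choose d)"
    using assms(3) by (simp add: card_subsets_of_size)
  also have "\<dots> \<le> (\<Sum>I\<in>subsets_of_size n d. measure_pmf.prob A (detection_event l I)) / real (n choose d)"
    by (intro divide_right_mono sum_mono prob) simp_all
  also have "\<dots> = measure_pmf.expectation A (detection_rate n l d)"
    unfolding detection_rate_eq_sum_indicator[abs_def]
    by (subst integral_divide_zero, subst Bochner_Integration.integral_sum)
      (simp_all add: integrable_real_indicator less_top[symmetric] measure_pmf.emeasure_finite)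
  finally show ?thesis .
qed

lemma not_randomized_nonadaptive_detects:
  fixes d :: "nat \<Rightarrow> nat"
  assumes "0 < n" "0 < R" "16 * m \<le> R" "0 < k"
    and dn: "\<And>i. i < k \<Longrightarrow> l \<le> d i \<and> d i \<le> n"
    and separated: "\<And>i j. i < j \<Longrightarrow> j < k \<Longrightarrow> R * R * d i \<le> d j"
    and small: "\<And>i. i < k \<Longrightarrow> 2 powr (2 * real m / real k) * (real (d i) / real n) ^ l \<le> 1/16"
  shows "\<not> randomized_nonadaptive_detects n l m A"
proof
  assume A: "randomized_nonadaptive_detects n l m A"
  have "3/4 * real k = (\<Sum>i<k. 3/4 :: real)"
    by simp
  also have "\<dots> \<le> (\<Sum>i<k. measure_pmf.expectation A (detection_rate n l (d i)))"
    by (intro sum_mono expectation_detection_rate_ge[OF A]) (simp_all add: dn)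
  also have "\<dots> = measure_pmf.expectation A (\<lambda>x. \<Sum>i<k. detection_rate n l (d i) x)"
    by (simp add: Bochner_Integration.integral_sum integrable_detection_rate)
  also have "\<dots> \<le> 9/16 * real k"
  proof (intro measure_pmf.integral_le_const AE_pmfI)
    fix x assume "x \<in> set_pmf A"
    then obtain T D where "x = (T, D)" "length T \<le> m"
      using A by (cases x) (auto simp: randomized_nonadaptive_detects_def)
    moreover have "(\<Sum>i<k. detection_rate n l (d i) (T, D)) \<le> 9/16 * real k"
      by (rule sum_detection_rate_le[OF assms(1-3) \<open>length T \<le> m\<close> _ separated small]) (simp add: dn)
    ultimately show "(\<Sum>i<k. detection_rate n l (d i) x) \<le> 9/16 * real k"
      by simp
  qed (simp add: integrable_detection_rate)
  finally show False
    using \<open>0 < k\<close> by simp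
qed

section \<open>Choice of the densities\<close>

lemma log_threshold_le:
  fixes a L :: real
  assumes "16 \<le> L" "1 \<le> l" "0 < a" "a \<le> 1/2"
    and "real m * (log 2 (real l) + log 2 L) < a\<^sup>2 / 24 * real l * L\<^sup>2"
  shows "log 2 (16 * (real m + 1)) \<le> 3 * (log 2 (real l) + log 2 L)"
proof -
  have "4 \<le> log 2 L" "0 \<le> log 2 (real l)"
    using assms(1,2) by (simp_all add: le_log_iff)
  have "real m + 1 \<le> real l * L\<^sup>2"
  proof -
    have "256 \<le> L\<^sup>2"
      using power_mono[OF assms(1), of 2] by simp
    then have "256 \<le> real l * L\<^sup>2"
      using assms(2) mult_mono[of 1 "real l" 256 "L\<^sup>2"] by simp
    have "a\<^sup>2 \<le> 1/4"
      using power_mono[OF assms(4), of 2] assms(3) by (simp add: power2_eq_square)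
    then have "a\<^sup>2 / 24 * real l * L\<^sup>2 \<le> 1/96 * (real l * L\<^sup>2)"
      using mult_right_mono[of "a\<^sup>2" "1/4" "real l * L\<^sup>2"] by (simp add: mult_ac)
    moreover have "real m * 4 \<le> real m * (log 2 (real l) + log 2 L)"
      using \<open>4 \<le> log 2 L\<close> \<open>0 \<le> log 2 (real l)\<close> by (intro mult_left_mono) auto
    ultimately show ?thesis
      using assms(5) \<open>256 \<le> real l * L\<^sup>2\<close> by linarith
  qed
  have "log 2 (16::real) = 4"
    using log_pow_cancel[of 2 4] by simp
  then have "log 2 (16 * (real m + 1)) = 4 + log 2 (real m + 1)"
    using log_mult_pos[of 16 "real m + 1" 2] by simp
  also have "\<dots> \<le> 4 + log 2 (real l * L\<^sup>2)"
    using \<open>real m + 1 \<le> real l * L\<^sup>2\<close> by simp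
  also have "\<dots> = 4 + log 2 (real l) + 2 * log 2 L"
    using assms(1,2) by (simp add: log_mult log_nat_power)
  also have "\<dots> \<le> 3 * (log 2 (real l) + log 2 L)"
    using \<open>4 \<le> log 2 L\<close> \<open>0 \<le> log 2 (real l)\<close> by (simp add: distrib_left)
  finally show ?thesis .
qed

lemma density_le_powr:
  fixes a :: real
  assumes "1 < real R" "1 < real n" "0 \<le> a" "real l \<le> real n powr (1 - 2 * a)"
    and "i \<le> nat \<lfloor>a * log 2 (real n) / (2 * log 2 (real R))\<rfloor>"
  shows "real (l * R ^ (2 * i)) \<le> real n powr (1 - a)"
proof -
  define x where "x = a * log 2 (real n) / (2 * log 2 (real R))"
  have "0 < log 2 (real R)" "0 \<le> x"
    using assms(1-3) by (simp_all add: x_def)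
  moreover have "real i \<le> real (nat \<lfloor>x\<rfloor>)"
    using assms(5) by (simp add: x_def)
  ultimately have "real i \<le> x"
    using of_nat_floor[of x] by linarith
  then have "2 * real i * log 2 (real R) \<le> 2 * x * log 2 (real R)"
    using \<open>0 < log 2 (real R)\<close> by (intro mult_right_mono) auto
  also have "\<dots> = a * log 2 (real n)"
    using \<open>0 < log 2 (real R)\<close> by (simp add: x_def)
  finally have "log 2 (real (R ^ (2 * i))) \<le> log 2 (real n powr a)"
    using assms(1,2) by (simp add: log_nat_power log_powr mult.commute)
  then have "real (R ^ (2 * i)) \<le> real n powr a"
    using assms(1,2) by simp
  then have "real (l * R ^ (2 * i)) \<le> real n powr (1 - 2 * a) * real n powr a"
    using assms(4) by (simp add: mult_mono)
  then show ?thesis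
    by (simp add: powr_add[symmetric])
qed

lemma log_ge_sixteen:
  fixes a :: real
  assumes "0 < a" "a \<le> 1/2" "8 \<le> a * log 2 (real n)"
  shows "16 \<le> log 2 (real n)" "1 < real n"
proof -
  have "0 < a * log 2 (real n)"
    using assms(3) by linarith
  then have "0 < log 2 (real n)"
    using assms(1) by (simp add: zero_less_mult_iff)
  then have "a * log 2 (real n) \<le> 1/2 * log 2 (real n)"
    using assms(2) by (intro mult_right_mono) auto
  then show "16 \<le> log 2 (real n)"
    using assms(3) by linarith
  show "1 < real n"
  proof (cases "n = 0")
    case False
    then show ?thesis
      using \<open>0 < log 2 (real n)\<close> by simp
  qed (use \<open>0 < log 2 (real n)\<close> in \<open>simp add: log_def\<close>)
qed

lemma tests_per_scale_le:
  fixes a L \<rho> \<Lambda> :: real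
  assumes "0 < a" "0 < L" "0 < \<rho>" "a * L / (2 * \<rho>) < real k" "\<rho> \<le> 3 * \<Lambda>"
    and "real m * \<Lambda> < a\<^sup>2 / 24 * real l * L\<^sup>2" "8 \<le> a * L" "1 \<le> l"
  shows "2 * real m / real k \<le> a * real l * L - 4"
proof -
  have "0 < a * L / (2 * \<rho>)"
    using assms(1-3) by simp
  then have "2 * real m / real k \<le> 2 * real m / (a * L / (2 * \<rho>))"
    using assms(4) by (intro divide_left_mono mult_pos_pos) auto
  also have "\<dots> = 4 * (real m * \<rho>) / (a * L)"
    using assms(1-3) by (simp add: field_simps)
  also have "\<dots> \<le> 4 * (real m * (3 * \<Lambda>)) / (a * L)"
    using assms(1,2,5) by (intro divide_right_mono mult_left_mono) auto
  also have "\<dots> \<le> 4 * (3 * (a\<^sup>2 / 24 * real l * L\<^sup>2)) / (a * L)"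
    using assms(1,2) mult_left_mono[OF less_imp_le[OF assms(6)], of 3]
    by (intro divide_right_mono mult_left_mono) (auto simp: mult_ac)
  also have "\<dots> = a * real l * L / 2"
    using assms(1,2) by (simp add: field_simps power2_eq_square)
  also have "\<dots> \<le> a * real l * L - 4"
  proof -
    have "a * L \<le> a * L * real l"
      using assms(1,2,8) by simp
    then show ?thesis
      using assms(7) by (simp add: mult_ac)
  qed
  finally show ?thesis .
qed

lemma powr_mult_density_pow_le:
  fixes a :: real
  assumes "1 < real n" "real d \<le> real n powr (1 - a)" "2 * real m / real k \<le> a * real l * log 2 (real n) - 4"
  shows "2 powr (2 * real m / real k) * (real d / real n) ^ l \<le> 1/16"
proof -
  have "real d / real n \<le> real n powr (- a)"
    using assms(1,2) by (simp add: divide_le_eq powr_diff powr_minus_divide field_simps)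
  then have "(real d / real n) ^ l \<le> (real n powr (- a)) ^ l"
    by (intro power_mono) auto
  also have "\<dots> = (2 powr log 2 (real n)) powr (- a * real l)"
    using assms(1) by (simp add: powr_powr flip: powr_realpow)
  also have "\<dots> = 2 powr (- a * real l * log 2 (real n))"
    by (simp only: powr_powr mult.commute)
  finally have "2 powr (2 * real m / real k) * (real d / real n) ^ l
      \<le> 2 powr (2 * real m / real k) * 2 powr (- a * real l * log 2 (real n))"
    by (intro mult_left_mono) auto
  also have "\<dots> = 2 powr (2 * real m / real k - a * real l * log 2 (real n))"
    by (simp add: powr_add[symmetric])
  also have "\<dots> \<le> 2 powr (-4)"
    using assms(3) by (intro powr_mono) auto
  finally show ?thesis
    by (simp add: powr_minus_divide)
qed

lemma no_detection_with_few_tests: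
  fixes a :: real
  assumes a: "0 < a" "a \<le> 1/2" and an: "8 \<le> a * log 2 (real n)"
    and l: "1 \<le> l" "real l \<le> real n powr (1 - 2 * a)"
    and few: "real m * (log 2 (real l) + log 2 (log 2 (real n))) < a\<^sup>2 / 24 * real l * (log 2 (real n))\<^sup>2"
  shows "\<not> randomized_nonadaptive_detects n l m A"
proof -
  define L where "L = log 2 (real n)"
  define R where "R = 16 * (m + 1)"
  define k where "k = nat \<lfloor>a * L / (2 * log 2 (real R))\<rfloor> + 1"
  define d where "d i = l * R ^ (2 * i)" for i
  have L16: "16 \<le> L" and n1: "1 < real n"
    unfolding L_def by (rule log_ge_sixteen[OF a an])+
  have "real R = 16 * (real m + 1)"
    by (simp add: R_def)
  then have "log 2 (real R) \<le> 3 * (log 2 (real l) + log 2 L)"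
    using log_threshold_le[OF L16 l(1) a few[folded L_def]] by (simp only:)
  have d_le: "real (d i) \<le> real n powr (1 - a)" if "i < k" for i
    unfolding d_def using that
    by (intro density_le_powr n1 l(2) less_imp_le[OF a(1)]) (auto simp: R_def k_def L_def)
  show ?thesis
  proof (rule not_randomized_nonadaptive_detects[where R = R and k = k and d = d])
    show "0 < n" "0 < R" "16 * m \<le> R" "0 < k"
      using n1 by (auto simp: R_def k_def)
    show "l \<le> d i \<and> d i \<le> n" if "i < k" for i
    proof
      show "l \<le> d i"
        by (simp add: d_def R_def)
      have "real n powr (1 - a) \<le> real n powr 1"
        using n1 a(1) by (intro powr_mono) auto
      then show "d i \<le> n"
        using d_le[OF that] n1 by (simp flip: of_nat_le_iff)
    qed
    show "R * R * d i \<le> d j" if "i < j" "j < k" for i j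
      using power_increasing[of "2 * i + 2" "2 * j" R] that
      by (simp add: d_def R_def power_add power2_eq_square mult_ac)
    have "2 * real m / real k \<le> a * real l * L - 4"
    proof (rule tests_per_scale_le[OF a(1) _ _ _ _ few[folded L_def] _ l(1)])
      show "0 < L" "0 < log 2 (real R)" "8 \<le> a * L"
        using L16 an by (auto simp: L_def R_def)
      show "a * L / (2 * log 2 (real R)) < real k"
        unfolding k_def by linarith
    qed fact
    then show "2 powr (2 * real m / real k) * (real (d i) / real n) ^ l \<le> 1/16" if "i < k" for i
      using powr_mult_density_pow_le[OF n1 d_le[OF that]] by (simp add: L_def)
  qed
qed

lemma tests_lower_bound:
  fixes a :: real
  assumes "0 < a" "a \<le> 1/2" "8 \<le> a * log 2 (real n)"
    and "1 \<le> l" "real l \<le> real n powr (1 - 2 * a)"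
    and "randomized_nonadaptive_detects n l m A"
  shows "a\<^sup>2 / 24 * real l * (log 2 (real n))\<^sup>2 / (log 2 (real l) + log 2 (log 2 (real n))) \<le> real m"
proof (rule ccontr)
  have "0 < log 2 (real l) + log 2 (log 2 (real n))"
    using log_ge_sixteen(1)[OF assms(1-3)] assms(4) by (simp add: add_nonneg_pos)
  moreover assume "\<not> ?thesis"
  ultimately have "real m * (log 2 (real l) + log 2 (log 2 (real n)))
      < a\<^sup>2 / 24 * real l * (log 2 (real n))\<^sup>2"
    by (simp only: not_le pos_less_divide_eq)
  then show False
    using no_detection_with_few_tests[OF assms(1-5)] assms(6) by blast
qed

theorem theorem14:
  fixes c :: real
  assumes "c < 1"
  shows "\<exists>C > 0. \<exists>N. \<forall>n \<ge> N. \<forall>l m A.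
           1 \<le> l \<longrightarrow> real l \<le> real n powr c \<longrightarrow>
           randomized_nonadaptive_detects n l m A \<longrightarrow>
           real m \<ge> C * real l * (log 2 (real n))\<^sup>2
                      / (log 2 (real l) + log 2 (log 2 (real n)))"
proof -
  define a where "a = (1 - max c 0) / 2"
  have a: "0 < a" "a \<le> 1/2"
    using assms by (auto simp: a_def)
  have "1 - 2 * a = max c 0"
    by (simp add: a_def field_simps)
  show ?thesis
  proof (intro exI[of _ "a\<^sup>2 / 24"] conjI exI[of _ "nat \<lceil>2 powr (8 / a)\<rceil>"] allI impI)
    show "0 < a\<^sup>2 / 24"
      using a by simp
    fix n l m A
    assume "nat \<lceil>2 powr (8 / a)\<rceil> \<le> n" "1 \<le> l" "real l \<le> real n powr c"
      and "randomized_nonadaptive_detects n l m A"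
    then have "2 powr (8 / a) \<le> real n"
      by linarith
    moreover have "1 \<le> 2 powr (8 / a)"
      using a(1) by (intro ge_one_powr_ge_zero) auto
    ultimately have "1 \<le> real n" "8 / a \<le> log 2 (real n)"
      by (simp_all add: le_log_iff)
    then have "8 \<le> a * log 2 (real n)"
      using a(1) by (simp add: pos_divide_le_eq mult.commute)
    moreover have "real n powr c \<le> real n powr (1 - 2 * a)"
      using \<open>1 \<le> real n\<close> \<open>1 - 2 * a = max c 0\<close> by (intro powr_mono) simp_all
    then have "real l \<le> real n powr (1 - 2 * a)"
      using \<open>real l \<le> real n powr c\<close> by linarith
    ultimately show "a\<^sup>2 / 24 * real l * (log 2 (real n))\<^sup>2
        / (log 2 (real l) + log 2 (log 2 (real n))) \<le> real m"
      using tests_lower_bound[OF a] \<open>1 \<le> l\<close> \<open>randomized_nonadaptive_detects n l m A\<close> by blast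
  qed
qed

end
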